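(* If $\mathcal R$ is a TRS that is complete modulo $\mathcal B$, then $\ddot{\mathcal R}$ is a TRS which is normalization equivalent modulo $\mathcal B$ to $\mathcal R$, conversion equivalent modulo $\mathcal B$ to $\mathcal R$, and canonical modulo $\mathcal B$.
   Context: Terms over a signature $\mathcal F$; $s\to_{\mathcal R}t$ is the usual rewrite relation (closure under contexts and substitutions), $\leftarrow$ its inverse. $\mathcal B$ is a fixed ES with $\mathrm{Var}(\ell)=\mathrm{Var}(r)$ for all $\ell\approx r\in\mathcal B$, $\sim_{\mathcal B}=\leftrightarrow^*_{\mathcal B}$, $\to_{\mathcal R/\mathcal B}=\sim_{\mathcal B}\cdot\to_{\mathcal R}\cdot\sim_{\mathcal B}$. $\mathcal R$ is terminating modulo $\mathcal B$ if $\to_{\mathcal R/\mathcal B}$ has no infinite sequence; Church–Rosser modulo $\mathcal B$ if $\leftrightarrow^*_{\mathcal R\cup\mathcal B}\subseteq\to^*_{\mathcal R}\cdot\sim_{\mathcal B}\cdot\leftarrow^*_{\mathcal R}$; complete modulo $\mathcal B$ if both. TRSs $\mathcal R,\mathcal S$ are normalization equivalent modulo $\mathcal B$ if $\to^!_{\mathcal R}\cdot\sim_{\mathcal B}=\to^!_{\mathcal S}\cdot\sim_{\mathcal B}$ ($a\to^!b$: $a\to^*b$ with $b$ a normal form), and conversion equivalent modulo $\mathcal B$ if $\leftrightarrow^*_{\mathcal R\cup\mathcal B}=\leftrightarrow^*_{\mathcal S\cup\mathcal B}$. Two rules $\ell\to r,\ell'\to r'$ are right-$\mathcal B$-equivalent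 variants if there is a renaming $\sigma$ with $\ell\sigma=\ell'$ and $r\sigma\sim_{\mathcal B}r'$; for a TRS $\mathcal T$, $\mathcal T_{\simeq}$ denotes a subset of $\mathcal T$ containing exactly one representative of each class of rules of $\mathcal T$ that are right-$\mathcal B$-equivalent variants of each other. A TRS is left-reduced if for every rule $\ell\to r$, $\ell$ is a normal form of the TRS without that rule; right-$\mathcal B$-reduced if for every rule $\ell\to r$, $r$ is a normal form of $\to_{\mathcal R/\mathcal B}$; canonical modulo $\mathcal B$ if complete modulo $\mathcal B$, left-reduced and right-$\mathcal B$-reduced. For $\mathcal R$ terminating modulo $\mathcal B$: $\dot{\mathcal R}=\{\ell\to r{\downarrow_{\mathcal R/\mathcal B}}\mid\ell\to r\in\mathcal R\}_{\simeq}$, where $r{\downarrow_{\mathcal R/\mathcal B}}$ is an arbitrary normal form of $r$ w.r.t. $\to_{\mathcal R/\mathcal B}$, and $\ddot{\mathcal R}=\{\ell\to r\in\dot{\mathcal R}\mid \ell\text{ is a normal form of }\dot{\mathcal R}\setminus\{\ell\to r\}\}$. *)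

theory Defs
  imports Main
begin

datatype ('f, 'v) "term" = Var 'v | Fun 'f "('f, 'v) term list"

type_synonym ('f, 'v) rule = "('f, 'v) term \<times> ('f, 'v) term"
type_synonym ('f, 'v) trs = "('f, 'v) rule set"

fun vars_term :: "('f, 'v) term \<Rightarrow> 'v set" where
  "vars_term (Var x) = {x}"
| "vars_term (Fun f ts) = (\<Union>t \<in> set ts. vars_term t)"

fun subst_apply :: "('f, 'v) term \<Rightarrow> ('v \<Rightarrow> ('f, 'v) term) \<Rightarrow> ('f, 'v) term" where
  "subst_apply (Var x) \<sigma> = \<sigma> x"
| "subst_apply (Fun f ts) \<sigma> = Fun f (map (\<lambda>t. subst_apply t \<sigma>) ts)"

datatype ('f, 'v) ctxt =
  Hole
| More 'f "('f, 'v) term list" "('f, 'v) ctxt" "('f, 'v) term list"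

fun ctxt_apply :: "('f, 'v) ctxt \<Rightarrow> ('f, 'v) term \<Rightarrow> ('f, 'v) term" where
  "ctxt_apply Hole t = t"
| "ctxt_apply (More f ss C ts) t = Fun f (ss @ ctxt_apply C t # ts)"

definition rstep :: "('f, 'v) trs \<Rightarrow> ('f, 'v) term rel" where
  "rstep R = {(ctxt_apply C (subst_apply l \<sigma>), ctxt_apply C (subst_apply r \<sigma>)) | C l r \<sigma>. (l, r) \<in> R}"

definition conv :: "('f, 'v) trs \<Rightarrow> ('f, 'v) term rel" where
  "conv E = (rstep E \<union> (rstep E)\<inverse>)\<^sup>*"

abbreviation equivB :: "('f, 'v) trs \<Rightarrow> ('f, 'v) term rel" where
  "equivB B \<equiv> conv B"

definition relto :: "('f, 'v) trs \<Rightarrow> ('f, 'v) trs \<Rightarrow> ('f, 'v) term rel" where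
  "relto R B = equivB B O rstep R O equivB B"

definition NF :: "'a rel \<Rightarrow> 'a set" where
  "NF r = {a. \<not> (\<exists>b. (a, b) \<in> r)}"

definition normalizability :: "'a rel \<Rightarrow> 'a rel" where
  "normalizability r = {(a, b). (a, b) \<in> r\<^sup>* \<and> b \<in> NF r}"

definition SN_rel :: "'a rel \<Rightarrow> bool" where
  "SN_rel r \<longleftrightarrow> \<not> (\<exists>f. \<forall>i. (f i, f (Suc i)) \<in> r)"

definition wf_trs :: "('f, 'v) trs \<Rightarrow> bool" where
  "wf_trs R \<longleftrightarrow> (\<forall>(l, r) \<in> R. (\<forall>x. l \<noteq> Var x) \<and> vars_term r \<subseteq> vars_term l)"

definition terminating_mod :: "('f, 'v) trs \<Rightarrow> ('f, 'v) trs \<Rightarrow> bool" where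
  "terminating_mod R B \<longleftrightarrow> SN_rel (relto R B)"

definition CR_mod :: "('f, 'v) trs \<Rightarrow> ('f, 'v) trs \<Rightarrow> bool" where
  "CR_mod R B \<longleftrightarrow> conv (R \<union> B) \<subseteq> (rstep R)\<^sup>* O equivB B O ((rstep R)\<inverse>)\<^sup>*"

definition complete_mod :: "('f, 'v) trs \<Rightarrow> ('f, 'v) trs \<Rightarrow> bool" where
  "complete_mod R B \<longleftrightarrow> terminating_mod R B \<and> CR_mod R B"

definition normalization_equivalent_mod :: "('f, 'v) trs \<Rightarrow> ('f, 'v) trs \<Rightarrow> ('f, 'v) trs \<Rightarrow> bool" where
  "normalization_equivalent_mod R S B \<longleftrightarrow>
     normalizability (rstep R) O equivB B = normalizability (rstep S) O equivB B"

definition conversion_equivalent_mod :: "('f, 'v) trs \<Rightarrow> ('f, 'v) trs \<Rightarrow> ('f, 'v) trs \<Rightarrow> bool" where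
  "conversion_equivalent_mod R S B \<longleftrightarrow> conv (R \<union> B) = conv (S \<union> B)"

definition left_reduced :: "('f, 'v) trs \<Rightarrow> bool" where
  "left_reduced R \<longleftrightarrow> (\<forall>(l, r) \<in> R. l \<in> NF (rstep (R - {(l, r)})))"

definition right_reduced_mod :: "('f, 'v) trs \<Rightarrow> ('f, 'v) trs \<Rightarrow> bool" where
  "right_reduced_mod R B \<longleftrightarrow> (\<forall>(l, r) \<in> R. r \<in> NF (relto R B))"

definition canonical_mod :: "('f, 'v) trs \<Rightarrow> ('f, 'v) trs \<Rightarrow> bool" where
  "canonical_mod R B \<longleftrightarrow> complete_mod R B \<and> left_reduced R \<and> right_reduced_mod R B"

definition renaming :: "('v \<Rightarrow> ('f, 'v) term) \<Rightarrow> bool" where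
  "renaming \<sigma> \<longleftrightarrow> (\<exists>\<pi>. bij \<pi> \<and> \<sigma> = (\<lambda>x. Var (\<pi> x)))"

definition right_variant :: "('f, 'v) trs \<Rightarrow> ('f, 'v) rule \<Rightarrow> ('f, 'v) rule \<Rightarrow> bool" where
  "right_variant B \<rho> \<rho>' \<longleftrightarrow>
     (\<exists>\<sigma>. renaming \<sigma> \<and> subst_apply (fst \<rho>) \<sigma> = fst \<rho>' \<and>
          (subst_apply (snd \<rho>) \<sigma>, snd \<rho>') \<in> equivB B)"

text \<open>S is a choice of T_\<simeq>: a subset of T with exactly one representative of each
  class of right-B-equivalent variants.\<close>
definition is_variant_reps :: "('f, 'v) trs \<Rightarrow> ('f, 'v) trs \<Rightarrow> ('f, 'v) trs \<Rightarrow> bool" where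
  "is_variant_reps B T S \<longleftrightarrow>
     S \<subseteq> T \<and>
     (\<forall>\<rho> \<in> T. \<exists>\<rho>' \<in> S. right_variant B \<rho> \<rho>') \<and>
     (\<forall>\<rho>1 \<in> S. \<forall>\<rho>2 \<in> S. right_variant B \<rho>1 \<rho>2 \<longrightarrow> \<rho>1 = \<rho>2)"

definition nf_choice :: "('f, 'v) trs \<Rightarrow> ('f, 'v) trs \<Rightarrow> (('f, 'v) term \<Rightarrow> ('f, 'v) term) \<Rightarrow> bool" where
  "nf_choice R B nf \<longleftrightarrow> (\<forall>t. (t, nf t) \<in> (relto R B)\<^sup>* \<and> nf t \<in> NF (relto R B))"

text \<open>Rdot: a choice of {l -> nf r | l -> r in R}_\<simeq>.\<close>
definition is_Rdot :: "('f, 'v) trs \<Rightarrow> ('f, 'v) trs \<Rightarrow> ('f, 'v) trs \<Rightarrow> bool" where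
  "is_Rdot R B D \<longleftrightarrow>
     (\<exists>nf. nf_choice R B nf \<and> is_variant_reps B {(l, nf r) | l r. (l, r) \<in> R} D)"

definition Rddot :: "('f, 'v) trs \<Rightarrow> ('f, 'v) trs" where
  "Rddot D = {(l, r) \<in> D. l \<in> NF (rstep (D - {(l, r)}))}"

end

theory Submission
  imports Defs "HOL-Combinatorics.Transposition"
begin

text \<open>Every rule of \<open>R\<ddot>\<close> is \<open>l \<rightarrow> r\<down>\<close> for a rule \<open>l \<rightarrow> r\<close> of \<open>R\<close>, so a step of
  \<open>R\<ddot>\<close> is a nonempty sequence of \<open>R/B\<close>-steps; this gives termination, right-reducedness and
  one inclusion between the conversions. The crux is that \<open>R\<ddot>\<close> has the same normal forms
  as \<open>R\<close>: by well-founded induction on encompassment, every left-hand side of \<open>R\<dot>\<close>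
  encompasses one of \<open>R\<ddot>\<close>, because two rules of \<open>R\<dot>\<close> with variant left-hand sides
  have normalised right-hand sides that are convertible, hence \<open>B\<close>-equivalent by Church-Rosser
  modulo \<open>B\<close>, so the rules coincide. Comparing normal forms then transfers conversion
  equivalence, Church-Rosser modulo \<open>B\<close> and normalization equivalence from \<open>R\<close> to \<open>R\<ddot>\<close>.\<close>

subsection \<open>Terms, contexts and substitutions\<close>

text \<open>Constants weigh more than variables, so that instantiating a variable by a non-variable
  strictly increases the size.\<close>
fun term_size :: "('f, 'v) term \<Rightarrow> nat" where
  "term_size (Var x) = 1"
| "term_size (Fun f ts) = Suc (Suc (sum_list (map term_size ts)))"

fun ctxt_compose :: "('f, 'v) ctxt \<Rightarrow> ('f, 'v) ctxt \<Rightarrow> ('f, 'v) ctxt" where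
  "ctxt_compose Hole D = D"
| "ctxt_compose (More f ss C ts) D = More f ss (ctxt_compose C D) ts"

fun ctxt_subst :: "('f, 'v) ctxt \<Rightarrow> ('v \<Rightarrow> ('f, 'v) term) \<Rightarrow> ('f, 'v) ctxt" where
  "ctxt_subst Hole \<sigma> = Hole"
| "ctxt_subst (More f ss C ts) \<sigma> =
     More f (map (\<lambda>t. subst_apply t \<sigma>) ss) (ctxt_subst C \<sigma>) (map (\<lambda>t. subst_apply t \<sigma>) ts)"

lemma ctxt_apply_compose: "ctxt_apply (ctxt_compose C D) t = ctxt_apply C (ctxt_apply D t)"
  by (induction C) auto

lemma subst_apply_ctxt_apply:
  "subst_apply (ctxt_apply C t) \<sigma> = ctxt_apply (ctxt_subst C \<sigma>) (subst_apply t \<sigma>)"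
  by (induction C) auto

lemma subst_apply_subst_apply:
  "subst_apply (subst_apply t \<sigma>) \<tau> = subst_apply t (\<lambda>x. subst_apply (\<sigma> x) \<tau>)"
  by (induction t) auto

lemma subst_apply_Var [simp]: "subst_apply t Var = t"
  by (induction t) (auto simp: map_idI)

lemma subst_apply_cong:
  "(\<And>x. x \<in> vars_term t \<Longrightarrow> \<sigma> x = \<tau> x) \<Longrightarrow> subst_apply t \<sigma> = subst_apply t \<tau>"
  by (induction t) auto

lemma finite_vars_term: "finite (vars_term t)"
  by (induction t) auto

lemma vars_term_subst_apply: "vars_term (subst_apply t \<sigma>) = (\<Union>x \<in> vars_term t. vars_term (\<sigma> x))"
  by (induction t) auto

lemma vars_term_ctxt_apply_mono:
  "vars_term t \<subseteq> vars_term s \<Longrightarrow> vars_term (ctxt_apply C t) \<subseteq> vars_term (ctxt_apply C s)"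
  by (induction C) auto

lemma sum_list_map_less:
  fixes f g :: "'a \<Rightarrow> 'b::ordered_cancel_comm_monoid_add"
  assumes "\<And>x. x \<in> set xs \<Longrightarrow> f x \<le> g x" and "y \<in> set xs" and "f y < g y"
  shows "sum_list (map f xs) < sum_list (map g xs)"
proof -
  obtain us vs where "xs = us @ y # vs"
    using split_list[OF assms(2)] by blast
  moreover have "sum_list (map f us) \<le> sum_list (map g us)" "sum_list (map f vs) \<le> sum_list (map g vs)"
    using assms(1) calculation by (auto intro: sum_list_mono)
  ultimately show ?thesis
    using add_le_less_mono add_less_le_mono assms(3) by fastforce
qed

lemma term_size_ctxt_apply: "term_size t \<le> term_size (ctxt_apply C t)"
  by (induction C) auto

lemma term_size_ctxt_apply_eq_imp_Hole: "term_size (ctxt_apply C t) = term_size t \<Longrightarrow> C = Hole"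
proof (induction C)
  case (More f ss C ts)
  then show ?case using term_size_ctxt_apply[of t C] by simp
qed simp

lemma term_size_subst_apply: "term_size t \<le> term_size (subst_apply t \<sigma>)"
proof (induction t)
  case (Var x)
  then show ?case by (cases "\<sigma> x") auto
next
  case (Fun f ts)
  then show ?case by (auto simp: o_def intro: sum_list_mono)
qed

lemma term_size_subst_apply_less:
  "x \<in> vars_term t \<Longrightarrow> \<forall>y. \<sigma> x \<noteq> Var y \<Longrightarrow> term_size t < term_size (subst_apply t \<sigma>)"
proof (induction t)
  case (Var z)
  then show ?case by (cases "\<sigma> z") auto
next
  case (Fun f ts)
  then obtain t where "t \<in> set ts" "x \<in> vars_term t" by auto
  with Fun have "sum_list (map term_size ts) < sum_list (map (\<lambda>t. term_size (subst_apply t \<sigma>)) ts)"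
    by (intro sum_list_map_less[of ts _ _ t] term_size_subst_apply) auto
  then show ?case by (simp add: o_def)
qed

lemma card_vars_term_le_term_size: "card (vars_term t) \<le> term_size t"
proof (induction t)
  case (Fun f ts)
  have "card (\<Union>t \<in> set ts. vars_term t) \<le> (\<Sum>t \<leftarrow> ts. card (vars_term t))"
    by (induction ts) (auto intro: order_trans[OF card_Un_le])
  also have "\<dots> \<le> sum_list (map term_size ts)"
    using Fun by (intro sum_list_mono) auto
  finally show ?case by simp
qed simp

subsection \<open>Renamings and encompassment\<close>

lemma ex_bij_extending_inj_on:
  fixes g :: "'a \<Rightarrow> 'a"
  assumes "finite A" and "inj_on g A"
  shows "\<exists>\<pi>. bij \<pi> \<and> (\<forall>x \<in> A. \<pi> x = g x)"
  using assms
proof (induction A rule: finite_induct)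
  case empty
  show ?case using bij_id by blast
next
  case (insert a A)
  then obtain \<pi> where \<pi>: "bij \<pi>" "\<forall>x \<in> A. \<pi> x = g x" by auto
  define \<pi>' where "\<pi>' = Transposition.transpose (\<pi> a) (g a) \<circ> \<pi>"
  have "\<pi>' x = g x" if "x \<in> insert a A" for x
  proof (cases "x = a")
    case False
    with that have "x \<in> A" by auto
    moreover have "\<pi> x \<noteq> \<pi> a" using \<pi>(1) False by (metis bij_pointE)
    moreover have "g x \<noteq> g a" using insert \<open>x \<in> A\<close> False by (meson inj_on_contraD insertCI)
    ultimately show ?thesis using \<pi>(2) by (simp add: \<pi>'_def)
  qed (simp add: \<pi>'_def)
  moreover have "bij \<pi>'" unfolding \<pi>'_def using \<pi>(1) by (simp add: bij_comp)
  ultimately show ?case by blast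
qed

lemma subst_apply_rename_inv:
  "bij \<pi> \<Longrightarrow> subst_apply (subst_apply t (\<lambda>x. Var (\<pi> x))) (\<lambda>x. Var (inv \<pi> x)) = t"
  by (simp add: subst_apply_subst_apply bij_is_inj)

lemma subst_apply_renaming:
  assumes size: "term_size (subst_apply t \<sigma>) = term_size t"
    and card: "card (vars_term t) \<le> card (vars_term (subst_apply t \<sigma>))"
  shows "\<exists>\<pi>. bij \<pi> \<and> subst_apply t (\<lambda>x. Var (\<pi> x)) = subst_apply t \<sigma>"
proof -
  have "\<exists>y. \<sigma> x = Var y" if "x \<in> vars_term t" for x
    using term_size_subst_apply_less[OF that, of \<sigma>] size by force
  then obtain g where g: "\<And>x. x \<in> vars_term t \<Longrightarrow> \<sigma> x = Var (g x)" by metis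
  then have "vars_term (subst_apply t \<sigma>) = g ` vars_term t"
    by (auto simp: vars_term_subst_apply)
  with card have "inj_on g (vars_term t)"
    by (metis eq_card_imp_inj_on card_image_le finite_vars_term le_antisym)
  then obtain \<pi> where "bij \<pi>" "\<forall>x \<in> vars_term t. \<pi> x = g x"
    using ex_bij_extending_inj_on[OF finite_vars_term] by blast
  moreover have "subst_apply t (\<lambda>x. Var (\<pi> x)) = subst_apply t \<sigma>"
    using calculation(2) g by (auto intro: subst_apply_cong)
  ultimately show ?thesis by blast
qed

definition encompasses :: "('f, 'v) term \<Rightarrow> ('f, 'v) term \<Rightarrow> bool" where
  "encompasses t l \<longleftrightarrow> (\<exists>C \<sigma>. t = ctxt_apply C (subst_apply l \<sigma>))"

lemma encompasses_refl: "encompasses t t"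
  unfolding encompasses_def by (metis ctxt_apply.simps(1) subst_apply_Var)

lemma encompasses_trans: "encompasses t s \<Longrightarrow> encompasses s l \<Longrightarrow> encompasses t l"
  unfolding encompasses_def
  by (metis ctxt_apply_compose subst_apply_ctxt_apply subst_apply_subst_apply)

lemma encompasses_renamed: "bij \<pi> \<Longrightarrow> encompasses t (subst_apply t (\<lambda>x. Var (\<pi> x)))"
  unfolding encompasses_def by (metis ctxt_apply.simps(1) subst_apply_rename_inv)

text \<open>An encompassing term of the same size can only identify variables of the encompassed
  one, which lowers the second component.\<close>
definition size_vars_measure :: "('f, 'v) term rel" where
  "size_vars_measure = measures [term_size, \<lambda>t. term_size t - card (vars_term t)]"

lemma wf_size_vars_measure: "wf size_vars_measure"
  unfolding size_vars_measure_def by simp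

lemma encompasses_imp_size_vars_measure_or_variant:
  assumes "encompasses l l'"
  shows "(l', l) \<in> size_vars_measure \<or> (\<exists>\<pi>. bij \<pi> \<and> l = subst_apply l' (\<lambda>x. Var (\<pi> x)))"
proof (cases "(l', l) \<in> size_vars_measure")
  case not_less: False
  obtain C \<sigma> where l: "l = ctxt_apply C (subst_apply l' \<sigma>)"
    using assms unfolding encompasses_def by blast
  have "term_size l' \<le> term_size (subst_apply l' \<sigma>)" "term_size (subst_apply l' \<sigma>) \<le> term_size l"
    by (rule term_size_subst_apply) (simp add: l term_size_ctxt_apply)
  with not_less have size: "term_size (subst_apply l' \<sigma>) = term_size l'" "term_size l = term_size l'"
    unfolding size_vars_measure_def by auto
  then have "C = Hole"
    using l term_size_ctxt_apply_eq_imp_Hole by metis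
  with l have l_inst: "l = subst_apply l' \<sigma>" by simp
  have "card (vars_term l') \<le> card (vars_term l)"
    using not_less size card_vars_term_le_term_size[of l] card_vars_term_le_term_size[of l']
    unfolding size_vars_measure_def by auto
  then show ?thesis
    using subst_apply_renaming[OF size(1)] l_inst by metis
qed simp

subsection \<open>Rewrite steps, conversions and rewriting modulo\<close>

lemma rstepI:
  "(l, r) \<in> R \<Longrightarrow> s = ctxt_apply C (subst_apply l \<sigma>) \<Longrightarrow> t = ctxt_apply C (subst_apply r \<sigma>) \<Longrightarrow>
    (s, t) \<in> rstep R"
  unfolding rstep_def by blast

lemma rstepE:
  assumes "(s, t) \<in> rstep R"
  obtains C l r \<sigma> where "(l, r) \<in> R" "s = ctxt_apply C (subst_apply l \<sigma>)" "t = ctxt_apply C (subst_apply r \<sigma>)"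
  using assms unfolding rstep_def by blast

lemma rstep_ctxt: "(s, t) \<in> rstep R \<Longrightarrow> (ctxt_apply C s, ctxt_apply C t) \<in> rstep R"
  by (elim rstepE, rule rstepI[where C = "ctxt_compose C _"]) (auto simp: ctxt_apply_compose)

lemma rstep_subst: "(s, t) \<in> rstep R \<Longrightarrow> (subst_apply s \<tau>, subst_apply t \<tau>) \<in> rstep R"
  by (elim rstepE, rule rstepI[where C = "ctxt_subst _ \<tau>" and \<sigma> = "\<lambda>x. subst_apply (_ x) \<tau>"])
     (auto simp: subst_apply_ctxt_apply subst_apply_subst_apply)

lemma rstep_mono: "R \<subseteq> S \<Longrightarrow> rstep R \<subseteq> rstep S"
  unfolding rstep_def by blast

lemma rstep_Un: "rstep (R \<union> S) = rstep R \<union> rstep S"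
  unfolding rstep_def by blast

lemma NF_rstep_iff: "t \<in> NF (rstep R) \<longleftrightarrow> (\<forall>(l, r) \<in> R. \<not> encompasses t l)"
  unfolding NF_def rstep_def encompasses_def by blast

lemma NF_rstep_subset:
  assumes "\<And>l r. (l, r) \<in> S \<Longrightarrow> \<exists>(l', r') \<in> R. encompasses l l'"
  shows "NF (rstep R) \<subseteq> NF (rstep S)"
proof
  fix t assume "t \<in> NF (rstep R)"
  then show "t \<in> NF (rstep S)"
    using assms encompasses_trans unfolding NF_rstep_iff by fast
qed

lemma NF_mono: "r \<subseteq> s \<Longrightarrow> NF s \<subseteq> NF r"
  unfolding NF_def by blast

lemma NF_trancl: "NF r \<subseteq> NF (r\<^sup>+)"
  unfolding NF_def by (auto dest: tranclD)

lemma NF_rtrancl: "(s, t) \<in> r\<^sup>* \<Longrightarrow> s \<in> NF r \<Longrightarrow> t = s"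
  by (erule converse_rtranclE) (auto simp: NF_def)

lemma SN_rel_iff_wf: "SN_rel r \<longleftrightarrow> wf (r\<inverse>)"
  unfolding SN_rel_def wf_iff_no_infinite_down_chain by simp

lemma ex_normalizability:
  assumes "wf (r\<inverse>)"
  shows "\<exists>t. (s, t) \<in> normalizability r"
  using assms
proof (induction s rule: wf_induct_rule)
  case (less s)
  show ?case
  proof (cases "s \<in> NF r")
    case False
    then obtain s' where "(s, s') \<in> r" unfolding NF_def by auto
    with less show ?thesis unfolding normalizability_def
      by (auto intro: converse_rtrancl_into_rtrancl)
  qed (auto simp: normalizability_def)
qed

lemma conv_refl [simp]: "(s, s) \<in> conv E"
  unfolding conv_def by simp

lemma conv_sym: "(s, t) \<in> conv E \<Longrightarrow> (t, s) \<in> conv E"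
  unfolding conv_def by (metis converse_Un converse_converse rtrancl_converseI sup_commute)

lemma conv_trans: "(s, u) \<in> conv E \<Longrightarrow> (u, t) \<in> conv E \<Longrightarrow> (s, t) \<in> conv E"
  unfolding conv_def by (rule rtrancl_trans)

lemma rstep_subset_conv: "rstep E \<subseteq> conv E"
  unfolding conv_def by auto

lemma conv_subset:
  assumes "rstep S \<subseteq> conv E"
  shows "conv S \<subseteq> conv E"
proof -
  have "(rstep S)\<inverse> \<subseteq> conv E" using assms conv_sym by blast
  with assms have "rstep S \<union> (rstep S)\<inverse> \<subseteq> (rstep E \<union> (rstep E)\<inverse>)\<^sup>*"
    unfolding conv_def by blast
  then show ?thesis
    unfolding conv_def by (rule rtrancl_subset_rtrancl)
qed

lemma rtrancl_subset_conv:
  assumes "rstep S \<subseteq> conv E"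
  shows "(rstep S)\<^sup>* \<subseteq> conv E"
proof -
  have "(rstep S)\<^sup>* \<subseteq> conv S" unfolding conv_def by (rule rtrancl_mono) blast
  with conv_subset[OF assms] show ?thesis by blast
qed

lemma conv_mono: "R \<subseteq> S \<Longrightarrow> conv R \<subseteq> conv S"
  by (intro conv_subset order_trans[OF rstep_mono rstep_subset_conv])

lemma rstep_subset_conv_Un: "rstep R \<subseteq> conv (R \<union> B)"
  by (rule order_trans[OF rstep_mono rstep_subset_conv]) blast

lemma conv_closed:
  assumes "\<And>s t. (s, t) \<in> rstep E \<Longrightarrow> (f s, f t) \<in> rstep E" and "(s, t) \<in> conv E"
  shows "(f s, f t) \<in> conv E"
  using assms(2) unfolding conv_def
proof (induction rule: rtrancl_induct)
  case (step u v)
  then have "(f u, f v) \<in> rstep E \<union> (rstep E)\<inverse>" using assms(1) by blast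
  with step.IH show ?case by (rule rtrancl_into_rtrancl)
qed simp

lemma relto_closed:
  assumes "\<And>s t E. (s, t) \<in> rstep E \<Longrightarrow> (f s, f t) \<in> rstep E" and "(s, t) \<in> relto R B"
  shows "(f s, f t) \<in> relto R B"
proof -
  obtain u v where "(s, u) \<in> conv B" "(u, v) \<in> rstep R" "(v, t) \<in> conv B"
    using assms(2) unfolding relto_def by blast
  then show ?thesis
    unfolding relto_def using conv_closed[of B f] assms(1) by blast
qed

lemma rtrancl_relto_ctxt:
  "(s, t) \<in> (relto R B)\<^sup>* \<Longrightarrow> (ctxt_apply C s, ctxt_apply C t) \<in> (relto R B)\<^sup>*"
  by (induction rule: rtrancl_induct) (auto intro: rtrancl_into_rtrancl relto_closed[where f = "ctxt_apply C", OF rstep_ctxt])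

lemma rtrancl_relto_subst:
  "(s, t) \<in> (relto R B)\<^sup>* \<Longrightarrow> (subst_apply s \<tau>, subst_apply t \<tau>) \<in> (relto R B)\<^sup>*"
  by (induction rule: rtrancl_induct) (auto intro: rtrancl_into_rtrancl relto_closed[where f = "\<lambda>t. subst_apply t \<tau>", OF rstep_subst])

lemma NF_relto_renamed:
  assumes "bij \<pi>" and "t \<in> NF (relto R B)"
  shows "subst_apply t (\<lambda>x. Var (\<pi> x)) \<in> NF (relto R B)"
proof -
  have "(t, subst_apply u (\<lambda>x. Var (inv \<pi> x))) \<in> relto R B"
    if "(subst_apply t (\<lambda>x. Var (\<pi> x)), u) \<in> relto R B" for u
    using relto_closed[where f = "\<lambda>t. subst_apply t (\<lambda>x. Var (inv \<pi> x))", OF rstep_subst that]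
    by (simp only: subst_apply_rename_inv[OF assms(1)])
  with assms(2) show ?thesis unfolding NF_def by blast
qed

lemma rstep_subset_relto: "rstep R \<subseteq> relto R B"
proof (rule subrelI)
  fix s t assume "(s, t) \<in> rstep R"
  then have "(s, t) \<in> rstep R O conv B" using conv_refl by (rule relcompI)
  with conv_refl show "(s, t) \<in> relto R B" unfolding relto_def by (rule relcompI)
qed

lemma relto_subset_conv: "relto R B \<subseteq> conv (R \<union> B)"
proof (rule subrelI)
  fix s t assume "(s, t) \<in> relto R B"
  then obtain u v where "(s, u) \<in> conv B" "(u, v) \<in> rstep R" "(v, t) \<in> conv B"
    unfolding relto_def by blast
  moreover have "conv B \<subseteq> conv (R \<union> B)" by (rule conv_mono) blast
  ultimately show "(s, t) \<in> conv (R \<union> B)"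
    using rstep_subset_conv_Un by (meson conv_trans subsetD)
qed

lemma rtrancl_relto_subset_conv: "(relto R B)\<^sup>* \<subseteq> conv (R \<union> B)"
proof (rule subrelI)
  fix s t assume "(s, t) \<in> (relto R B)\<^sup>*"
  then show "(s, t) \<in> conv (R \<union> B)"
  proof (induction rule: rtrancl_induct)
    case (step u v)
    with relto_subset_conv show ?case by (meson conv_trans subsetD)
  qed simp
qed

lemma trancl_relto_subset_conv: "(relto R B)\<^sup>+ \<subseteq> conv (R \<union> B)"
  by (rule order_trans[OF _ rtrancl_relto_subset_conv]) (rule subrelI, erule trancl_into_rtrancl)

lemma relto_conv_compose:
  assumes "(s, u) \<in> conv B" "(u, v) \<in> relto R B" "(v, t) \<in> conv B"
  shows "(s, t) \<in> relto R B"
proof -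
  obtain u' v' where u': "(u, u') \<in> conv B" and "(u', v') \<in> rstep R" and v': "(v', v) \<in> conv B"
    using assms(2) unfolding relto_def by blast
  moreover have "(s, u') \<in> conv B" using assms(1) u' by (rule conv_trans)
  moreover have "(v', t) \<in> conv B" using v' assms(3) by (rule conv_trans)
  ultimately show ?thesis unfolding relto_def by blast
qed

lemma trancl_relto_conv_compose:
  assumes "(s, u) \<in> conv B" "(u, v) \<in> (relto R B)\<^sup>+" "(v, t) \<in> conv B"
  shows "(s, t) \<in> (relto R B)\<^sup>+"
proof -
  obtain u' where "(u, u') \<in> relto R B" "(u', v) \<in> (relto R B)\<^sup>*"
    using assms(2) by (auto dest: tranclD)
  with relto_conv_compose[OF assms(1) _ conv_refl] have "(s, v) \<in> (relto R B)\<^sup>+"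
    by (blast intro: rtrancl_into_trancl2)
  then obtain v' where "(s, v') \<in> (relto R B)\<^sup>*" "(v', v) \<in> relto R B"
    by (auto dest: tranclD2)
  with relto_conv_compose[OF conv_refl _ assms(3)] show ?thesis
    by (blast intro: rtrancl_into_trancl1)
qed

lemma relto_subset_trancl_relto:
  assumes "rstep S \<subseteq> (relto R B)\<^sup>+"
  shows "relto S B \<subseteq> (relto R B)\<^sup>+"
proof (rule subrelI)
  fix s t assume "(s, t) \<in> relto S B"
  then obtain u v where "(s, u) \<in> conv B" "(u, v) \<in> rstep S" "(v, t) \<in> conv B"
    unfolding relto_def by blast
  with assms show "(s, t) \<in> (relto R B)\<^sup>+"
    using trancl_relto_conv_compose by blast
qed

lemma terminating_mod_subset:
  assumes "relto S B \<subseteq> (relto R B)\<^sup>+" and "terminating_mod R B"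
  shows "terminating_mod S B"
proof -
  have "wf (((relto R B)\<inverse>)\<^sup>+)"
    using assms(2) unfolding terminating_mod_def SN_rel_iff_wf by (rule wf_trancl)
  moreover have "(relto S B)\<inverse> \<subseteq> ((relto R B)\<inverse>)\<^sup>+"
    using assms(1) by (auto simp: trancl_converse)
  ultimately show ?thesis
    unfolding terminating_mod_def SN_rel_iff_wf by (rule wf_subset)
qed

lemma wf_converse_rstep_if_terminating_mod: "terminating_mod R B \<Longrightarrow> wf ((rstep R)\<inverse>)"
  unfolding terminating_mod_def SN_rel_iff_wf
  by (erule wf_subset) (use rstep_subset_relto in blast)

lemma rstep_subset_trancl_relto:
  assumes "\<And>l r. (l, r) \<in> S \<Longrightarrow> \<exists>r0. (l, r0) \<in> R \<and> (r0, r) \<in> (relto R B)\<^sup>*"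
  shows "rstep S \<subseteq> (relto R B)\<^sup>+"
proof (rule subrelI)
  fix s t assume "(s, t) \<in> rstep S"
  then obtain C l r \<sigma> where lr: "(l, r) \<in> S"
    and s: "s = ctxt_apply C (subst_apply l \<sigma>)" and t: "t = ctxt_apply C (subst_apply r \<sigma>)"
    by (rule rstepE)
  obtain r0 where "(l, r0) \<in> R" and r0: "(r0, r) \<in> (relto R B)\<^sup>*"
    using assms[OF lr] by blast
  then have "(s, ctxt_apply C (subst_apply r0 \<sigma>)) \<in> relto R B"
    using rstepI[OF _ s refl] rstep_subset_relto by blast
  moreover have "(ctxt_apply C (subst_apply r0 \<sigma>), t) \<in> (relto R B)\<^sup>*"
    unfolding t using r0 by (intro rtrancl_relto_ctxt rtrancl_relto_subst)
  ultimately show "(s, t) \<in> (relto R B)\<^sup>+" by (rule rtrancl_into_trancl2)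
qed

lemma vars_term_rstep:
  assumes "\<forall>(l, r) \<in> E. vars_term r \<subseteq> vars_term l" and "(s, t) \<in> rstep E"
  shows "vars_term t \<subseteq> vars_term s"
  using assms(2)
proof (rule rstepE)
  fix C l r \<sigma>
  assume lr: "(l, r) \<in> E" and s: "s = ctxt_apply C (subst_apply l \<sigma>)"
    and t: "t = ctxt_apply C (subst_apply r \<sigma>)"
  from assms(1) lr have "vars_term r \<subseteq> vars_term l" by blast
  then have "vars_term (subst_apply r \<sigma>) \<subseteq> vars_term (subst_apply l \<sigma>)"
    by (auto simp: vars_term_subst_apply)
  then show ?thesis unfolding s t by (rule vars_term_ctxt_apply_mono)
qed

lemma vars_term_conv:
  assumes "\<forall>(l, r) \<in> B. vars_term l = vars_term r" and "(s, t) \<in> conv B"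
  shows "vars_term t \<subseteq> vars_term s"
proof -
  have "\<forall>(l, r) \<in> B \<union> B\<inverse>. vars_term r \<subseteq> vars_term l"
    using assms(1) by auto
  moreover have "rstep B \<union> (rstep B)\<inverse> = rstep (B \<union> B\<inverse>)"
    unfolding rstep_def by blast
  ultimately have one_step: "vars_term v \<subseteq> vars_term u"
    if "(u, v) \<in> rstep B \<union> (rstep B)\<inverse>" for u v
    using that by (metis vars_term_rstep)
  from assms(2) show ?thesis
    unfolding conv_def
  proof (induction rule: rtrancl_induct)
    case (step u v)
    then show ?case using one_step[OF step.hyps(2)] by blast
  qed simp
qed

lemma vars_term_rtrancl_relto:
  assumes "wf_trs R" and "\<forall>(l, r) \<in> B. vars_term l = vars_term r" and "(s, t) \<in> (relto R B)\<^sup>*"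
  shows "vars_term t \<subseteq> vars_term s"
proof -
  have R_vars: "\<forall>(l, r) \<in> R. vars_term r \<subseteq> vars_term l"
    using assms(1) unfolding wf_trs_def by blast
  have one_step: "vars_term v \<subseteq> vars_term u" if uv: "(u, v) \<in> relto R B" for u v
  proof -
    obtain u' v' where "(u, u') \<in> conv B" "(u', v') \<in> rstep R" "(v', v) \<in> conv B"
      using uv unfolding relto_def by blast
    then have "vars_term u' \<subseteq> vars_term u" "vars_term v' \<subseteq> vars_term u'" "vars_term v \<subseteq> vars_term v'"
      using vars_term_conv[OF assms(2)] vars_term_rstep[OF R_vars] by blast+
    then show ?thesis by blast
  qed
  from assms(3) show ?thesis
  proof (induction rule: rtrancl_induct)
    case (step u v)
    then show ?case using one_step[OF step.hyps(2)] by blast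
  qed simp
qed

lemma wf_trs_rhs_reduct:
  assumes "wf_trs R" and "\<forall>(l, r) \<in> B. vars_term l = vars_term r"
    and "\<And>l r. (l, r) \<in> S \<Longrightarrow> \<exists>r0. (l, r0) \<in> R \<and> (r0, r) \<in> (relto R B)\<^sup>*"
  shows "wf_trs S"
proof -
  have "(\<forall>x. l \<noteq> Var x) \<and> vars_term r \<subseteq> vars_term l" if lr: "(l, r) \<in> S" for l r
  proof -
    obtain r0 where "(l, r0) \<in> R" "(r0, r) \<in> (relto R B)\<^sup>*"
      using assms(3)[OF lr] by blast
    with assms(1) vars_term_rtrancl_relto[OF assms(1,2)] show ?thesis
      unfolding wf_trs_def by fastforce
  qed
  then show ?thesis unfolding wf_trs_def by blast
qed

subsection \<open>Transfer along a terminating system with the same normal forms\<close>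

lemma CR_mod_NF_conv:
  assumes "CR_mod R B" and "(s, t) \<in> conv (R \<union> B)" and "s \<in> NF (rstep R)" "t \<in> NF (rstep R)"
  shows "(s, t) \<in> conv B"
proof -
  obtain s' t' where "(s, s') \<in> (rstep R)\<^sup>*" "(s', t') \<in> conv B" "(t, t') \<in> (rstep R)\<^sup>*"
    using assms(1,2) unfolding CR_mod_def by (blast dest: rtrancl_converseD)
  with assms(3,4) show ?thesis by (metis NF_rtrancl)
qed

lemma conv_subset_join_mod:
  assumes "CR_mod R B" and "wf ((rstep S)\<inverse>)"
    and "NF (rstep S) \<subseteq> NF (rstep R)" and "rstep S \<subseteq> conv (R \<union> B)"
  shows "conv (R \<union> B) \<subseteq> (rstep S)\<^sup>* O conv B O ((rstep S)\<inverse>)\<^sup>*"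
proof (rule subrelI)
  fix s t assume st: "(s, t) \<in> conv (R \<union> B)"
  obtain s' t' where s': "(s, s') \<in> normalizability (rstep S)" and t': "(t, t') \<in> normalizability (rstep S)"
    using ex_normalizability[OF assms(2)] by blast
  then have "(s, s') \<in> conv (R \<union> B)" "(t, t') \<in> conv (R \<union> B)"
    using rtrancl_subset_conv[OF assms(4)] unfolding normalizability_def by blast+
  with st have "(s', t') \<in> conv (R \<union> B)"
    by (blast intro: conv_trans conv_sym)
  with s' t' assms(1,3) have "(s', t') \<in> conv B"
    unfolding normalizability_def by (blast intro: CR_mod_NF_conv)
  with s' t' show "(s, t) \<in> (rstep S)\<^sup>* O conv B O ((rstep S)\<inverse>)\<^sup>*"
    unfolding normalizability_def by (blast intro: rtrancl_converseI)
qed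

lemma conv_eq_transfer:
  assumes "CR_mod R B" and "wf ((rstep S)\<inverse>)"
    and "NF (rstep S) \<subseteq> NF (rstep R)" and "rstep S \<subseteq> conv (R \<union> B)"
  shows "conv (S \<union> B) = conv (R \<union> B)"
proof
  have "rstep B \<subseteq> conv (R \<union> B)" by (rule order_trans[OF rstep_mono rstep_subset_conv]) blast
  with assms(4) show "conv (S \<union> B) \<subseteq> conv (R \<union> B)"
    by (intro conv_subset) (simp add: rstep_Un)
next
  note S = rstep_subset_conv_Un[of S B]
  have B: "conv B \<subseteq> conv (S \<union> B)" by (rule conv_mono) blast
  show "conv (R \<union> B) \<subseteq> conv (S \<union> B)"
  proof (rule subrelI)
    fix s t assume "(s, t) \<in> conv (R \<union> B)"
    then obtain u v where su: "(s, u) \<in> (rstep S)\<^sup>*" and uv: "(u, v) \<in> conv B"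
      and vt: "(v, t) \<in> ((rstep S)\<inverse>)\<^sup>*"
      using conv_subset_join_mod[OF assms] by blast
    have "(t, v) \<in> conv (S \<union> B)"
      using rtrancl_converseD[OF vt] rtrancl_subset_conv[OF S] by blast
    then have "(u, t) \<in> conv (S \<union> B)"
      using uv B by (blast intro: conv_trans[OF _ conv_sym])
    moreover have "(s, u) \<in> conv (S \<union> B)"
      using su rtrancl_subset_conv[OF S] by blast
    ultimately show "(s, t) \<in> conv (S \<union> B)"
      by (rule conv_trans[rotated])
  qed
qed

lemma CR_mod_transfer:
  assumes "CR_mod R B" and "wf ((rstep S)\<inverse>)"
    and "NF (rstep S) \<subseteq> NF (rstep R)" and "rstep S \<subseteq> conv (R \<union> B)"
  shows "CR_mod S B"
  unfolding CR_mod_def conv_eq_transfer[OF assms] by (rule conv_subset_join_mod[OF assms])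

lemma normalizability_O_conv_subset:
  assumes "CR_mod R B" and "wf ((rstep R)\<inverse>)"
    and "NF (rstep S) \<subseteq> NF (rstep R)" and "(rstep S)\<^sup>* \<subseteq> conv (R \<union> B)"
  shows "normalizability (rstep S) O conv B \<subseteq> normalizability (rstep R) O conv B"
proof (rule subrelI)
  fix s u assume "(s, u) \<in> normalizability (rstep S) O conv B"
  then obtain t where "(s, t) \<in> normalizability (rstep S)" and tu: "(t, u) \<in> conv B"
    by (rule relcompEpair)
  then have t: "(s, t) \<in> (rstep S)\<^sup>*" "t \<in> NF (rstep R)" "(t, u) \<in> conv B"
    using assms(3) unfolding normalizability_def by auto
  obtain t' where t': "(s, t') \<in> normalizability (rstep R)"
    using ex_normalizability[OF assms(2)] by blast
  with t' rtrancl_subset_conv[OF rstep_subset_conv_Un] have "(s, t') \<in> conv (R \<union> B)" unfolding normalizability_def by blast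
  moreover have "(s, t) \<in> conv (R \<union> B)" using t(1) assms(4) by blast
  ultimately have "(t', t) \<in> conv (R \<union> B)" by (rule conv_trans[OF conv_sym])
  with t' t(2) have "(t', t) \<in> conv B"
    unfolding normalizability_def using CR_mod_NF_conv[OF assms(1)] by blast
  then have "(t', u) \<in> conv B" using t(3) by (rule conv_trans)
  with t' show "(s, u) \<in> normalizability (rstep R) O conv B" by (rule relcompI)
qed

lemma normalization_equivalent_mod_transfer:
  assumes "CR_mod R B" "CR_mod S B" and "terminating_mod R B" "terminating_mod S B"
    and NF: "NF (rstep S) = NF (rstep R)" and conv: "conv (S \<union> B) = conv (R \<union> B)"
  shows "normalization_equivalent_mod S R B"
proof -
  have S_conv: "rstep S \<subseteq> conv (R \<union> B)" and R_conv: "rstep R \<subseteq> conv (S \<union> B)"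
    using rstep_subset_conv_Un conv by blast+
  show ?thesis
    unfolding normalization_equivalent_mod_def
  proof
    show "normalizability (rstep S) O conv B \<subseteq> normalizability (rstep R) O conv B"
      by (rule normalizability_O_conv_subset[OF assms(1) wf_converse_rstep_if_terminating_mod[OF assms(3)]
            equalityD1[OF NF] rtrancl_subset_conv[OF S_conv]])
    show "normalizability (rstep R) O conv B \<subseteq> normalizability (rstep S) O conv B"
      by (rule normalizability_O_conv_subset[OF assms(2) wf_converse_rstep_if_terminating_mod[OF assms(4)]
            equalityD2[OF NF] rtrancl_subset_conv[OF R_conv]])
  qed
qed

lemma right_reduced_mod_if_relto_subset:
  assumes "relto S B \<subseteq> (relto R B)\<^sup>+" and "\<And>l r. (l, r) \<in> S \<Longrightarrow> r \<in> NF (relto R B)"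
  shows "right_reduced_mod S B"
proof -
  have "NF (relto R B) \<subseteq> NF (relto S B)"
    using NF_trancl NF_mono[OF assms(1)] by (rule order_trans)
  with assms(2) show ?thesis unfolding right_reduced_mod_def by fast
qed

subsection \<open>The reduced system\<close>

lemma lhs_encompasses_Rddot_lhs:
  assumes variant_lhs_eq: "\<And>l1 r1 l2 r2 \<pi>. (l1, r1) \<in> D \<Longrightarrow> (l2, r2) \<in> D \<Longrightarrow> bij \<pi> \<Longrightarrow>
      l2 = subst_apply l1 (\<lambda>x. Var (\<pi> x)) \<Longrightarrow> (l1, r1) = (l2, r2)"
    and "(l, r) \<in> D"
  shows "\<exists>(l', r') \<in> Rddot D. encompasses l l'"
  using wf_size_vars_measure \<open>(l, r) \<in> D\<close>
proof (induction l arbitrary: r rule: wf_induct_rule)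
  case (less l)
  show ?case
  proof (cases "(l, r) \<in> Rddot D")
    case True
    then show ?thesis using encompasses_refl by blast
  next
    case False
    with less.prems obtain l' r' where lr': "(l', r') \<in> D" "(l', r') \<noteq> (l, r)" "encompasses l l'"
      unfolding Rddot_def NF_def rstep_def encompasses_def by blast
    from encompasses_imp_size_vars_measure_or_variant[OF lr'(3)] lr' less.prems variant_lhs_eq
    have "(l', l) \<in> size_vars_measure" by blast
    with less.IH lr' show ?thesis by (blast intro: encompasses_trans)
  qed
qed

lemma left_reduced_Rddot: "left_reduced (Rddot D)"
  unfolding left_reduced_def
proof (intro ballI, clarify)
  fix l r assume "(l, r) \<in> Rddot D"
  then have "l \<in> NF (rstep (D - {(l, r)}))" unfolding Rddot_def by blast
  moreover have "Rddot D - {(l, r)} \<subseteq> D - {(l, r)}" unfolding Rddot_def by blast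
  ultimately show "l \<in> NF (rstep (Rddot D - {(l, r)}))"
    using NF_mono[OF rstep_mono] by blast
qed

lemma Rdot_rule:
  assumes "is_variant_reps B {(l, nf r) | l r. (l, r) \<in> R} D" and "(l, r) \<in> D"
  shows "\<exists>r0. (l, r0) \<in> R \<and> r = nf r0"
  using assms unfolding is_variant_reps_def by blast

lemma Rdot_lhs_variant:
  assumes "is_variant_reps B {(l, nf r) | l r. (l, r) \<in> R} D" and "(l, r) \<in> R"
  shows "\<exists>(l', r') \<in> D. \<exists>\<pi>. bij \<pi> \<and> l' = subst_apply l (\<lambda>x. Var (\<pi> x))"
  using assms unfolding is_variant_reps_def right_variant_def renaming_def by fastforce

lemma Rdot_variant_lhs_eq:
  fixes R B D :: "('f, 'v) trs"
  assumes CR: "CR_mod R B" and nf: "nf_choice R B nf"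
    and reps: "is_variant_reps B {(l, nf r) | l r. (l, r) \<in> R} D"
    and D: "(l1, r1) \<in> D" "(l2, r2) \<in> D" and \<pi>: "bij \<pi>" and l2: "l2 = subst_apply l1 (\<lambda>x. Var (\<pi> x))"
  shows "(l1, r1) = (l2, r2)"
proof -
  define \<sigma> :: "'v \<Rightarrow> ('f, 'v) term" where "\<sigma> = (\<lambda>x. Var (\<pi> x))"
  obtain r1' r2' where R: "(l1, r1') \<in> R" "(l2, r2') \<in> R" and r: "r1 = nf r1'" "r2 = nf r2'"
    using Rdot_rule[OF reps] D by metis
  have steps: "(r1', r1) \<in> (relto R B)\<^sup>*" "(r2', r2) \<in> (relto R B)\<^sup>*"
    using nf unfolding nf_choice_def r by blast+
  have "(l2, subst_apply r1' \<sigma>) \<in> rstep R" "(l2, r2') \<in> rstep R"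
    using rstepI[OF R(1), of _ Hole] rstepI[OF R(2), of _ Hole "Var"] unfolding l2 \<sigma>_def by auto
  then have "(l2, subst_apply r1' \<sigma>) \<in> conv (R \<union> B)" "(l2, r2') \<in> conv (R \<union> B)"
    using rstep_subset_conv_Un by blast+
  moreover have "(subst_apply r1' \<sigma>, subst_apply r1 \<sigma>) \<in> conv (R \<union> B)" "(r2', r2) \<in> conv (R \<union> B)"
    using rtrancl_relto_subst[OF steps(1)] steps(2) rtrancl_relto_subset_conv by blast+
  ultimately have "(subst_apply r1 \<sigma>, r2) \<in> conv (R \<union> B)"
    by (meson conv_sym conv_trans)
  moreover have "subst_apply r1 \<sigma> \<in> NF (rstep R)" "r2 \<in> NF (rstep R)"
    using nf NF_relto_renamed[OF \<pi>] NF_mono[OF rstep_subset_relto]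
    unfolding nf_choice_def r \<sigma>_def by blast+
  ultimately have "(subst_apply r1 \<sigma>, r2) \<in> conv B"
    by (rule CR_mod_NF_conv[OF CR])
  then have "right_variant B (l1, r1) (l2, r2)"
    unfolding right_variant_def renaming_def using \<pi> l2 \<sigma>_def by auto
  with reps D show ?thesis
    unfolding is_variant_reps_def by blast
qed

lemma Rddot_rule:
  assumes "nf_choice R B nf" and "is_variant_reps B {(l, nf r) | l r. (l, r) \<in> R} D"
    and "(l, r) \<in> Rddot D"
  shows "\<exists>r0. (l, r0) \<in> R \<and> (r0, r) \<in> (relto R B)\<^sup>* \<and> r \<in> NF (relto R B)"
  using assms Rdot_rule unfolding Rddot_def nf_choice_def by blast

lemma NF_rstep_Rddot_Rdot:
  assumes CR: "CR_mod R B" and nf: "nf_choice R B nf"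
    and reps: "is_variant_reps B {(l, nf r) | l r. (l, r) \<in> R} D"
  shows "NF (rstep (Rddot D)) = NF (rstep R)"
proof
  show "NF (rstep R) \<subseteq> NF (rstep (Rddot D))"
  proof (rule NF_rstep_subset)
    fix l r assume "(l, r) \<in> Rddot D"
    then show "\<exists>(l', r') \<in> R. encompasses l l'"
      using Rdot_rule[OF reps] encompasses_refl unfolding Rddot_def by blast
  qed
  show "NF (rstep (Rddot D)) \<subseteq> NF (rstep R)"
  proof (rule NF_rstep_subset)
    fix l r assume "(l, r) \<in> R"
    then obtain l' r' \<pi> where "(l', r') \<in> D" "bij \<pi>" "l' = subst_apply l (\<lambda>x. Var (\<pi> x))"
      using Rdot_lhs_variant[OF reps] by blast
    moreover have "\<exists>(l'', r'') \<in> Rddot D. encompasses l' l''"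
      using lhs_encompasses_Rddot_lhs Rdot_variant_lhs_eq[OF CR nf reps] calculation(1) by blast
    ultimately show "\<exists>(l'', r'') \<in> Rddot D. encompasses l l''"
      using encompasses_renamed encompasses_trans by blast
  qed
qed

theorem theorem6p12:
  fixes R B D :: "('f, 'v) trs"
  assumes B_vars: "\<forall>(l, r) \<in> B. vars_term l = vars_term r"
    and R_trs: "wf_trs R"
    and complete: "complete_mod R B"
    and Rdot: "is_Rdot R B D"
  shows "wf_trs (Rddot D)
    \<and> normalization_equivalent_mod (Rddot D) R B
    \<and> conversion_equivalent_mod (Rddot D) R B
    \<and> canonical_mod (Rddot D) B"
proof -
  obtain nf where nf: "nf_choice R B nf" and reps: "is_variant_reps B {(l, nf r) | l r. (l, r) \<in> R} D"
    using Rdot unfolding is_Rdot_def by blast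
  have CR: "CR_mod R B" and SN: "terminating_mod R B"
    using complete unfolding complete_mod_def by blast+
  let ?Rd = "Rddot D"
  note rhs = Rddot_rule[OF nf reps]
  have relto_Rd: "relto ?Rd B \<subseteq> (relto R B)\<^sup>+"
    by (intro relto_subset_trancl_relto rstep_subset_trancl_relto) (use rhs in blast)
  have SN_Rd: "terminating_mod ?Rd B"
    using relto_Rd SN by (rule terminating_mod_subset)
  have NF: "NF (rstep ?Rd) = NF (rstep R)"
    using CR nf reps by (rule NF_rstep_Rddot_Rdot)
  have Rd_conv: "rstep ?Rd \<subseteq> conv (R \<union> B)"
    using rstep_subset_relto relto_Rd trancl_relto_subset_conv by (rule order_trans[OF order_trans])
  note transfer_hyps = CR wf_converse_rstep_if_terminating_mod[OF SN_Rd] equalityD1[OF NF] Rd_conv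
  have conv: "conv (?Rd \<union> B) = conv (R \<union> B)" and CR_Rd: "CR_mod ?Rd B"
    using conv_eq_transfer[OF transfer_hyps] CR_mod_transfer[OF transfer_hyps] by blast+
  moreover have "normalization_equivalent_mod ?Rd R B"
    using CR CR_Rd SN SN_Rd NF conv by (rule normalization_equivalent_mod_transfer)
  moreover have "wf_trs ?Rd"
    by (rule wf_trs_rhs_reduct[OF R_trs B_vars]) (use rhs in blast)
  moreover have "right_reduced_mod ?Rd B"
    by (rule right_reduced_mod_if_relto_subset[OF relto_Rd]) (use rhs in blast)
  ultimately show ?thesis
    using SN_Rd left_reduced_Rddot[of D]
    unfolding conversion_equivalent_mod_def canonical_mod_def complete_mod_def by blast
qed

end
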